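(* Let $TS=(S,\Sigma_b\cup\Sigma_r,S_0,R,\le)$ be a process given by a finite set $\Delta$ of labelled rules, and let $P'_0,P'_1,\dots,P'_w$ be the sequence of rule sets defined below. If a configuration $s\in S$ is reachable in $TS(P'_i)$ for some $i\in\{0,\dots,w\}$ (i.e. there is $s_0\in S_0$ with $s_0\xrightarrow{*}s$ in $TS(P'_i)$), then $s$ is reachable in the reconfigurable broadcast network $RBN(TS)$, i.e. there exist an initial configuration $\theta_0\in\Theta_0$, a configuration $\theta$ with $\theta_0\xrightarrow{*}\theta$ in $RBN(TS)$, and a vertex $v$ of $\theta$ with $L_\theta(v)=s$.
   Context: Fix a finite alphabet $\Sigma$; let $\Sigma_b=\{!!a:a\in\Sigma\}$ (broadcast labels) and $\Sigma_r=\{??a:a\in\Sigma\}$ (receive labels). A labelled well-structured transition system (labelled WSTS) is a tuple $(S,\Lambda,S_0,R,\le)$ with $S$ a set of configurations, $\Lambda$ a finite alphabet, $S_0\subseteq S$ the initial configurations, $R\subseteq S\times\Lambda\times S$, and $\le$ a well-quasi-order on $S$ compatible with $R$: if $s_1\le t_1$ and $(s_1,a,s_2)\in R$ then there is $t_2$ with $(t_1,a,t_2)\in R$ and $s_2\le t_2$. A process is a labelled WSTS with $\Lambda=\Sigma_b\cup\Sigma_r$. The process is assumed to be given by a finite description: a finite set $\Delta$ of rules, each rule $t$ carrying a label in $\Sigma_b\cup\Sigma_r$ and inducing a set of transitions of $R$ with that label ($s\xrightarrow{t}s'$ means rule $t$ is enabled at $s$ and produces $s'$), such that $R$ is the union of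 the transitions induced by the rules. For $\Delta'\subseteq\Delta$, $TS(\Delta')$ denotes the system with the same $S,S_0,\le$ but only the transitions induced by rules in $\Delta'$; it is assumed to be again a labelled WSTS. For a rule $t$, $c_t$ denotes the finite set of $\le$-minimal configurations at which $t$ is enabled. For $a\in\Sigma$, $B_a$ is the set of rules labelled $!!a$, $R_a$ the set of rules labelled $??a$, and $Rec=\bigcup_a R_a$. A configuration $c$ is coverable in a system if some reachable configuration $c'$ satisfies $c'\ge c$. Sequence $P'_i$: $P'_0=\Delta\setminus Rec$. For $i\ge1$, let $AddT_i$ be the union of the sets $R_a$ over all letters $a$ not yet handled in an earlier round such that some $t\in B_a$ has some element of $c_t$ coverable in $TS(P'_{i-1})$ (handled letters are then removed from further consideration), and $P'_i=P'_{i-1}\cup AddT_i$; $w$ is the first index with $AddT_{w+1}=\emptyset$, so $P'_w$ is the final rule set. An $S$-graph is a finite undirected graph $(V,E,L)$ without self-loops with labelling $L:V\to S$. $\Theta$ is the set of all finite $S$-graphs, $\Theta_0$ the set of all finite $S_0$-graphs (all labels in $S_0$, arbitrary topology). Broadcast step: $(V,E,L)\xrightarrow{a}(V,E,L')$ if there is $v\in V$ with $(L(v),!!a,L'(v))\in R$, $(L(u),??a,L'(u))\in R$ for every neighbour $u$ of $v$, and $L'(w)=L(w)$ for all other $w$. Reconfiguration step: $(V,E,L)\to(V,E',L)$ for any set $E'$ of edges on $V$ without self-loops. $RBN(TS)$ is the transition system on $\Theta$ with initial set $\Theta_0$ and both kinds of steps. *)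

theory Defs
  imports Main
begin

datatype 'a lbl = Bcast 'a | Recv 'a

text \<open>A process: the set of configurations S is the whole type 's.
  Each rule t has a label and induces the transitions p_step t s s'.\<close>
record ('s, 'a, 'r) process =
  p_Sig   :: "'a set"
  p_Rules :: "'r set"
  p_lab   :: "'r \<Rightarrow> 'a lbl"
  p_step  :: "'r \<Rightarrow> 's \<Rightarrow> 's \<Rightarrow> bool"
  p_init  :: "'s set"
  p_le    :: "'s \<Rightarrow> 's \<Rightarrow> bool"

definition lts :: "('s,'a,'r) process \<Rightarrow> 'r set \<Rightarrow> 's \<Rightarrow> 'a lbl \<Rightarrow> 's \<Rightarrow> bool" where
  "lts TS D s l s' \<longleftrightarrow> (\<exists>t\<in>D. p_lab TS t = l \<and> p_step TS t s s')"

abbreviation R_rel :: "('s,'a,'r) process \<Rightarrow> 's \<Rightarrow> 'a lbl \<Rightarrow> 's \<Rightarrow> bool" where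
  "R_rel TS \<equiv> lts TS (p_Rules TS)"

definition wqo_on_type :: "('s \<Rightarrow> 's \<Rightarrow> bool) \<Rightarrow> bool" where
  "wqo_on_type le \<longleftrightarrow> reflp le \<and> transp le \<and>
     (\<forall>f :: nat \<Rightarrow> 's. \<exists>i j. i < j \<and> le (f i) (f j))"

definition compatible :: "('s,'a,'r) process \<Rightarrow> 'r set \<Rightarrow> bool" where
  "compatible TS D \<longleftrightarrow> (\<forall>s1 t1 l s2. p_le TS s1 t1 \<and> lts TS D s1 l s2 \<longrightarrow>
      (\<exists>t2. lts TS D t1 l t2 \<and> p_le TS s2 t2))"

definition enabled :: "('s,'a,'r) process \<Rightarrow> 'r \<Rightarrow> 's \<Rightarrow> bool" where
  "enabled TS t s \<longleftrightarrow> (\<exists>s'. p_step TS t s s')"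

definition cmin :: "('s,'a,'r) process \<Rightarrow> 'r \<Rightarrow> 's set" where
  "cmin TS t = {c. enabled TS t c \<and> (\<forall>c'. enabled TS t c' \<and> p_le TS c' c \<longrightarrow> p_le TS c c')}"

definition is_process :: "('s,'a,'r) process \<Rightarrow> bool" where
  "is_process TS \<longleftrightarrow>
     finite (p_Sig TS) \<and> finite (p_Rules TS) \<and>
     (\<forall>t\<in>p_Rules TS. p_lab TS t \<in> Bcast ` p_Sig TS \<union> Recv ` p_Sig TS) \<and>
     wqo_on_type (p_le TS) \<and>
     (\<forall>D. D \<subseteq> p_Rules TS \<longrightarrow> compatible TS D) \<and>
     (\<forall>t\<in>p_Rules TS. finite (cmin TS t))"

definition ts_step :: "('s,'a,'r) process \<Rightarrow> 'r set \<Rightarrow> 's \<Rightarrow> 's \<Rightarrow> bool" where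
  "ts_step TS D s s' \<longleftrightarrow> (\<exists>t\<in>D. p_step TS t s s')"

definition ts_reach :: "('s,'a,'r) process \<Rightarrow> 'r set \<Rightarrow> 's \<Rightarrow> 's \<Rightarrow> bool" where
  "ts_reach TS D = (ts_step TS D)\<^sup>*\<^sup>*"

definition coverable :: "('s,'a,'r) process \<Rightarrow> 'r set \<Rightarrow> 's \<Rightarrow> bool" where
  "coverable TS D c \<longleftrightarrow> (\<exists>s0\<in>p_init TS. \<exists>s'. ts_reach TS D s0 s' \<and> p_le TS c s')"

definition Bset :: "('s,'a,'r) process \<Rightarrow> 'a \<Rightarrow> 'r set" where
  "Bset TS a = {t\<in>p_Rules TS. p_lab TS t = Bcast a}"

definition Rset :: "('s,'a,'r) process \<Rightarrow> 'a \<Rightarrow> 'r set" where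
  "Rset TS a = {t\<in>p_Rules TS. p_lab TS t = Recv a}"

definition Rec :: "('s,'a,'r) process \<Rightarrow> 'r set" where
  "Rec TS = (\<Union>a\<in>p_Sig TS. Rset TS a)"

definition new_letters :: "('s,'a,'r) process \<Rightarrow> 'r set \<Rightarrow> 'a set \<Rightarrow> 'a set" where
  "new_letters TS P H = {a\<in>p_Sig TS. a \<notin> H \<and>
      (\<exists>t\<in>Bset TS a. \<exists>c\<in>cmin TS t. coverable TS P c)}"

text \<open>pseq TS i = (P'_i, letters handled in rounds 1..i).\<close>
fun pseq :: "('s,'a,'r) process \<Rightarrow> nat \<Rightarrow> 'r set \<times> 'a set" where
  "pseq TS 0 = (p_Rules TS - Rec TS, {})"
| "pseq TS (Suc i) = (let P = fst (pseq TS i); H = snd (pseq TS i);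
                          N = new_letters TS P H
                      in (P \<union> (\<Union>a\<in>N. Rset TS a), H \<union> N))"

definition Pseq :: "('s,'a,'r) process \<Rightarrow> nat \<Rightarrow> 'r set" where
  "Pseq TS i = fst (pseq TS i)"

definition AddT_Suc :: "('s,'a,'r) process \<Rightarrow> nat \<Rightarrow> 'r set" where
  "AddT_Suc TS i = (\<Union>a\<in>new_letters TS (fst (pseq TS i)) (snd (pseq TS i)). Rset TS a)"

definition final_index :: "('s,'a,'r) process \<Rightarrow> nat" where
  "final_index TS = (LEAST w. AddT_Suc TS w = {})"

text \<open>S-graphs: finite vertex set (vertices are naturals), undirected edges as
  two-element sets, labelling L (only relevant on the vertex set).\<close>
record 's sgraph =
  Vs  :: "nat set"
  Es  :: "nat set set"
  Lab :: "nat \<Rightarrow> 's"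

definition valid_edges :: "nat set \<Rightarrow> nat set set \<Rightarrow> bool" where
  "valid_edges V E \<longleftrightarrow> E \<subseteq> {{u, v} | u v. u \<in> V \<and> v \<in> V \<and> u \<noteq> v}"

definition sgraph_wf :: "'s sgraph \<Rightarrow> bool" where
  "sgraph_wf g \<longleftrightarrow> finite (Vs g) \<and> valid_edges (Vs g) (Es g)"

definition Theta0 :: "('s,'a,'r) process \<Rightarrow> 's sgraph set" where
  "Theta0 TS = {g. sgraph_wf g \<and> (\<forall>v\<in>Vs g. Lab g v \<in> p_init TS)}"

definition neighbour :: "'s sgraph \<Rightarrow> nat \<Rightarrow> nat \<Rightarrow> bool" where
  "neighbour g v u \<longleftrightarrow> {u, v} \<in> Es g \<and> u \<noteq> v"

definition bcast_step :: "('s,'a,'r) process \<Rightarrow> 'a \<Rightarrow> 's sgraph \<Rightarrow> 's sgraph \<Rightarrow> bool" where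
  "bcast_step TS a g g' \<longleftrightarrow> Vs g' = Vs g \<and> Es g' = Es g \<and>
     (\<exists>v\<in>Vs g. R_rel TS (Lab g v) (Bcast a) (Lab g' v) \<and>
        (\<forall>u. neighbour g v u \<longrightarrow> R_rel TS (Lab g u) (Recv a) (Lab g' u)) \<and>
        (\<forall>w. w \<noteq> v \<and> \<not> neighbour g v w \<longrightarrow> Lab g' w = Lab g w))"

definition reconf_step :: "'s sgraph \<Rightarrow> 's sgraph \<Rightarrow> bool" where
  "reconf_step g g' \<longleftrightarrow> Vs g' = Vs g \<and> Lab g' = Lab g \<and> valid_edges (Vs g) (Es g')"

definition rbn_step :: "('s,'a,'r) process \<Rightarrow> 's sgraph \<Rightarrow> 's sgraph \<Rightarrow> bool" where
  "rbn_step TS g g' \<longleftrightarrow> (\<exists>a. bcast_step TS a g g') \<or> reconf_step g g'"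

definition rbn_reach :: "('s,'a,'r) process \<Rightarrow> 's sgraph \<Rightarrow> 's sgraph \<Rightarrow> bool" where
  "rbn_reach TS = (rbn_step TS)\<^sup>*\<^sup>*"

end

theory Submission
  imports Defs
begin

text \<open>Each state reachable in \<open>TS(P'\<^sub>i)\<close> can be carried by a single vertex of a network
  whose other vertices only serve as helpers. Local broadcast steps are simulated by
  disconnecting the vertex; a receive step on letter \<open>a\<close> is simulated by putting a disjoint
  copy of a network next to it in which some vertex reaches a state covering a minimal
  enabling configuration of a broadcast \<open>!!a\<close>, which by construction of \<open>P'\<^sub>i\<close> is
  reachable in an earlier \<open>TS(P'\<^sub>j)\<close>; connecting exactly these two vertices and letting the
  helper broadcast performs the receive step.\<close>

lemma Theta0_sgraph_wf: "g \<in> Theta0 TS \<Longrightarrow> sgraph_wf g"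
  by (simp add: Theta0_def)

lemma rbn_step_sgraph_wf:
  assumes "rbn_step TS g h" "sgraph_wf g"
  shows "sgraph_wf h \<and> Vs h = Vs g"
  using assms unfolding rbn_step_def bcast_step_def reconf_step_def sgraph_wf_def by auto

lemma rbn_reach_sgraph_wf:
  assumes "rbn_reach TS g h" "sgraph_wf g"
  shows "sgraph_wf h \<and> Vs h = Vs g"
  using assms unfolding rbn_reach_def
  by (induction rule: rtranclp_induct) (auto dest: rbn_step_sgraph_wf)

lemma valid_edges_Un: "valid_edges V E \<Longrightarrow> valid_edges W F \<Longrightarrow> valid_edges (V \<union> W) (E \<union> F)"
  unfolding valid_edges_def by blast

lemma neighbour_in_Vs: "sgraph_wf g \<Longrightarrow> neighbour g v u \<Longrightarrow> u \<in> Vs g"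
  unfolding sgraph_wf_def valid_edges_def neighbour_def
  by (auto simp: doubleton_eq_iff)

lemma rbn_reach_broadcast:
  assumes wf: "sgraph_wf g" and u: "u \<in> Vs g" and N: "N \<subseteq> Vs g - {u}"
    and sender: "R_rel TS (Lab g u) (Bcast a) x"
    and receivers: "\<forall>w\<in>N. R_rel TS (Lab g w) (Recv a) (y w)"
  shows "rbn_reach TS g (g\<lparr>Lab := \<lambda>w. if w = u then x else if w \<in> N then y w else Lab g w\<rparr>)"
proof -
  define L where "L = (\<lambda>w. if w = u then x else if w \<in> N then y w else Lab g w)"
  define star where "star = g\<lparr>Es := (\<lambda>w. {u, w}) ` N\<rparr>"
  have "reconf_step g star"
    using u N unfolding reconf_step_def star_def valid_edges_def by force
  then have to_star: "rbn_step TS g star"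
    unfolding rbn_step_def by blast
  have "neighbour star u w \<longleftrightarrow> w \<in> N" for w
    using N unfolding neighbour_def star_def by (auto simp: doubleton_eq_iff)
  then have "bcast_step TS a star (star\<lparr>Lab := L\<rparr>)"
    using u N sender receivers unfolding bcast_step_def L_def
    by (auto simp: star_def intro!: bexI[of _ u])
  then have broadcast: "rbn_step TS star (star\<lparr>Lab := L\<rparr>)"
    unfolding rbn_step_def by blast
  have "rbn_step TS (star\<lparr>Lab := L\<rparr>) (g\<lparr>Lab := L\<rparr>)"
    using wf unfolding rbn_step_def reconf_step_def star_def sgraph_wf_def by auto
  with to_star broadcast show ?thesis
    unfolding rbn_reach_def L_def by (meson rtranclp.rtrancl_into_rtrancl rtranclp.rtrancl_refl)
qed

definition sgraph_extend :: "'s sgraph \<Rightarrow> nat set \<Rightarrow> nat set set \<Rightarrow> (nat \<Rightarrow> 's) \<Rightarrow> 's sgraph" where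
  "sgraph_extend g W F M = \<lparr>Vs = Vs g \<union> W, Es = Es g \<union> F, Lab = (\<lambda>x. if x \<in> Vs g then Lab g x else M x)\<rparr>"

lemma rbn_step_sgraph_extend:
  assumes step: "rbn_step TS g h" and wf: "sgraph_wf g"
    and disj: "Vs g \<inter> W = {}" and F: "valid_edges W F"
  shows "rbn_step TS (sgraph_extend g W F M) (sgraph_extend h W F M)"
proof -
  from step consider a where "bcast_step TS a g h" | "reconf_step g h"
    unfolding rbn_step_def by blast
  then show ?thesis
  proof cases
    case 1
    then obtain v where v: "v \<in> Vs g" "R_rel TS (Lab g v) (Bcast a) (Lab h v)"
      "\<forall>u. neighbour g v u \<longrightarrow> R_rel TS (Lab g u) (Recv a) (Lab h u)"
      "\<forall>w. w \<noteq> v \<and> \<not> neighbour g v w \<longrightarrow> Lab h w = Lab g w"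
      and same: "Vs h = Vs g" "Es h = Es g"
      unfolding bcast_step_def by blast
    have "{u, v} \<notin> F" for u
    proof
      assume "{u, v} \<in> F"
      then have "v \<in> W" using F unfolding valid_edges_def by (auto simp: doubleton_eq_iff)
      then show False using v(1) disj by blast
    qed
    then have nb: "neighbour (sgraph_extend g W F M) v u \<longleftrightarrow> neighbour g v u" for u
      unfolding neighbour_def sgraph_extend_def by auto
    have "bcast_step TS a (sgraph_extend g W F M) (sgraph_extend h W F M)"
      unfolding bcast_step_def
    proof (intro conjI bexI[of _ v])
      show "\<forall>u. neighbour (sgraph_extend g W F M) v u \<longrightarrow>
          R_rel TS (Lab (sgraph_extend g W F M) u) (Recv a) (Lab (sgraph_extend h W F M) u)"
        using v same neighbour_in_Vs[OF wf] unfolding nb by (auto simp: sgraph_extend_def)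
      show "\<forall>w. w \<noteq> v \<and> \<not> neighbour (sgraph_extend g W F M) v w \<longrightarrow>
          Lab (sgraph_extend h W F M) w = Lab (sgraph_extend g W F M) w"
        using v same unfolding nb by (auto simp: sgraph_extend_def)
    qed (use v same in \<open>auto simp: sgraph_extend_def\<close>)
    then show ?thesis unfolding rbn_step_def by blast
  next
    case 2
    then have "reconf_step (sgraph_extend g W F M) (sgraph_extend h W F M)"
      using F unfolding reconf_step_def sgraph_extend_def by (auto intro: valid_edges_Un)
    then show ?thesis unfolding rbn_step_def by blast
  qed
qed

lemma rbn_reach_sgraph_extend:
  assumes "rbn_reach TS g h" "sgraph_wf g" "Vs g \<inter> W = {}" "valid_edges W F"
  shows "rbn_reach TS (sgraph_extend g W F M) (sgraph_extend h W F M)"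
  using assms(1) unfolding rbn_reach_def
proof (induction rule: rtranclp_induct)
  case (step y z)
  have "sgraph_wf y \<and> Vs y = Vs g"
    using rbn_reach_sgraph_wf[of TS g y] step(1) assms(2) unfolding rbn_reach_def by blast
  then have "rbn_step TS (sgraph_extend y W F M) (sgraph_extend z W F M)"
    using rbn_step_sgraph_extend[OF step(2)] assms(3,4) by auto
  with step(3) show ?case by (meson rtranclp.rtrancl_into_rtrancl)
qed simp

lemma rbn_reach_disjoint_union:
  assumes g: "g0 \<in> Theta0 TS" "rbn_reach TS g0 g"
    and h: "h0 \<in> Theta0 TS" "rbn_reach TS h0 h"
    and disj: "Vs g0 \<inter> Vs h0 = {}"
  obtains k0 k where "k0 \<in> Theta0 TS" "rbn_reach TS k0 k" "Vs k0 = Vs g0 \<union> Vs h0"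
    "\<forall>x\<in>Vs g0. Lab k x = Lab g x" "\<forall>x\<in>Vs h0. Lab k x = Lab h x"
proof
  have wf: "sgraph_wf g0" "sgraph_wf h0" using g(1) h(1) by (auto dest: Theta0_sgraph_wf)
  have wf': "sgraph_wf g \<and> Vs g = Vs g0" "sgraph_wf h \<and> Vs h = Vs h0"
    using rbn_reach_sgraph_wf g(2) h(2) wf by blast+
  have E: "valid_edges (Vs g0) (Es g)" "valid_edges (Vs h0) (Es h0)"
    using wf wf' by (auto simp: sgraph_wf_def)
  define U where "U = (\<lambda>x. if x \<in> Vs g0 then Lab g x else Lab h0 x)"
  have "rbn_reach TS (sgraph_extend g0 (Vs h0) (Es h0) U) (sgraph_extend g (Vs h0) (Es h0) U)"
    using rbn_reach_sgraph_extend[OF g(2) wf(1) disj E(2)] .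
  moreover have "sgraph_extend g (Vs h0) (Es h0) U = sgraph_extend h0 (Vs g0) (Es g) U"
    using wf' disj by (auto simp: sgraph_extend_def U_def fun_eq_iff)
  moreover have "rbn_reach TS (sgraph_extend h0 (Vs g0) (Es g) U) (sgraph_extend h (Vs g0) (Es g) U)"
    using rbn_reach_sgraph_extend[OF h(2) wf(2) _ E(1)] disj by blast
  ultimately show "rbn_reach TS (sgraph_extend g0 (Vs h0) (Es h0) U) (sgraph_extend h (Vs g0) (Es g) U)"
    unfolding rbn_reach_def by simp
  show "sgraph_extend g0 (Vs h0) (Es h0) U \<in> Theta0 TS"
    using g(1) h(1) disj unfolding Theta0_def sgraph_wf_def sgraph_extend_def U_def
    by (auto intro: valid_edges_Un)
  show "Vs (sgraph_extend g0 (Vs h0) (Es h0) U) = Vs g0 \<union> Vs h0"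
    by (simp add: sgraph_extend_def)
  show "\<forall>x\<in>Vs g0. Lab (sgraph_extend h (Vs g0) (Es g) U) x = Lab g x"
    "\<forall>x\<in>Vs h0. Lab (sgraph_extend h (Vs g0) (Es g) U) x = Lab h x"
    using wf' disj by (auto simp: sgraph_extend_def U_def)
qed

text \<open>The freedom to avoid any finite set of vertex names is what allows disjoint copies of
  networks to be combined.\<close>
definition rbn_realisable :: "('s, 'a, 'r) process \<Rightarrow> 's \<Rightarrow> bool" where
  "rbn_realisable TS s \<longleftrightarrow> (\<forall>X v. finite X \<longrightarrow> v \<notin> X \<longrightarrow>
     (\<exists>g0 g. g0 \<in> Theta0 TS \<and> rbn_reach TS g0 g \<and> v \<in> Vs g0 \<and> Vs g0 \<inter> X = {} \<and> Lab g v = s))"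

lemma rbn_realisable_init:
  assumes "s0 \<in> p_init TS"
  shows "rbn_realisable TS s0"
  unfolding rbn_realisable_def
proof (intro allI impI)
  fix X and v :: nat
  assume "v \<notin> X"
  moreover have "\<lparr>Vs = {v}, Es = {}, Lab = \<lambda>_. s0\<rparr> \<in> Theta0 TS"
    using assms by (simp add: Theta0_def sgraph_wf_def valid_edges_def)
  ultimately show "\<exists>g0 g. g0 \<in> Theta0 TS \<and> rbn_reach TS g0 g \<and> v \<in> Vs g0 \<and> Vs g0 \<inter> X = {} \<and> Lab g v = s0"
    unfolding rbn_reach_def by fastforce
qed

lemma rbn_realisable_broadcast:
  assumes "rbn_realisable TS s" "R_rel TS s (Bcast a) s'"
  shows "rbn_realisable TS s'"
  unfolding rbn_realisable_def
proof (intro allI impI)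
  fix X and v :: nat
  assume "finite X" "v \<notin> X"
  then obtain g0 g where g: "g0 \<in> Theta0 TS" "rbn_reach TS g0 g" "v \<in> Vs g0" "Vs g0 \<inter> X = {}"
    "Lab g v = s"
    using assms(1) unfolding rbn_realisable_def by blast
  have "sgraph_wf g \<and> Vs g = Vs g0"
    using rbn_reach_sgraph_wf[OF g(2) Theta0_sgraph_wf[OF g(1)]] .
  then have "rbn_reach TS g (g\<lparr>Lab := (Lab g)(v := s')\<rparr>)"
    using rbn_reach_broadcast[of g v "{}" TS a s' "\<lambda>_. s'"] g(3,5) assms(2)
    by (simp add: fun_upd_def cong: if_cong)
  with g show "\<exists>g0 g. g0 \<in> Theta0 TS \<and> rbn_reach TS g0 g \<and> v \<in> Vs g0 \<and> Vs g0 \<inter> X = {} \<and> Lab g v = s'"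
    unfolding rbn_reach_def by (intro exI[of _ g0] exI[of _ "g\<lparr>Lab := (Lab g)(v := s')\<rparr>"]) auto
qed

lemma rbn_realisable_receive:
  assumes receiver: "rbn_realisable TS s" "R_rel TS s (Recv a) s'"
    and sender: "rbn_realisable TS r" "R_rel TS r (Bcast a) x"
  shows "rbn_realisable TS s'"
  unfolding rbn_realisable_def
proof (intro allI impI)
  fix X and v :: nat
  assume X: "finite X" "v \<notin> X"
  then obtain g0 g where g: "g0 \<in> Theta0 TS" "rbn_reach TS g0 g" "v \<in> Vs g0" "Vs g0 \<inter> X = {}"
    "Lab g v = s"
    using receiver(1) unfolding rbn_realisable_def by blast
  define Y where "Y = X \<union> Vs g0"
  have "finite Y"
    using X(1) Theta0_sgraph_wf[OF g(1)] by (simp add: Y_def sgraph_wf_def)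
  then obtain u where u: "u \<notin> Y"
    using ex_new_if_finite infinite_UNIV_nat by blast
  then obtain h0 h where h: "h0 \<in> Theta0 TS" "rbn_reach TS h0 h" "u \<in> Vs h0" "Vs h0 \<inter> Y = {}"
    "Lab h u = r"
    using sender(1) \<open>finite Y\<close> unfolding rbn_realisable_def by blast
  have "Vs g0 \<inter> Vs h0 = {}" using h(4) by (auto simp: Y_def)
  then obtain k0 k where k: "k0 \<in> Theta0 TS" "rbn_reach TS k0 k" "Vs k0 = Vs g0 \<union> Vs h0"
    "\<forall>y\<in>Vs g0. Lab k y = Lab g y" "\<forall>y\<in>Vs h0. Lab k y = Lab h y"
    using rbn_reach_disjoint_union[OF g(1,2) h(1,2)] by blast
  have wf: "sgraph_wf k \<and> Vs k = Vs k0"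
    using rbn_reach_sgraph_wf[OF k(2) Theta0_sgraph_wf[OF k(1)]] .
  have "u \<noteq> v" using u g(3) by (auto simp: Y_def)
  then have "rbn_reach TS k (k\<lparr>Lab := \<lambda>w. if w = u then x else if w \<in> {v} then s' else Lab k w\<rparr>)"
    using wf k(3-5) g(3,5) h(3,5) receiver(2) sender(2)
    by (intro rbn_reach_broadcast) auto
  with k(2) have "rbn_reach TS k0 (k\<lparr>Lab := \<lambda>w. if w = u then x else if w \<in> {v} then s' else Lab k w\<rparr>)"
    unfolding rbn_reach_def by simp
  moreover have "v \<in> Vs k0" "Vs k0 \<inter> X = {}"
    using k(3) g(3,4) h(4) by (auto simp: Y_def)
  ultimately show "\<exists>g0 g. g0 \<in> Theta0 TS \<and> rbn_reach TS g0 g \<and> v \<in> Vs g0 \<and> Vs g0 \<inter> X = {} \<and> Lab g v = s'"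
    using k(1) \<open>u \<noteq> v\<close> by (intro exI[of _ k0] exI[of _ "k\<lparr>Lab := _\<rparr>"]) auto
qed

lemma Pseq_subset_Rules: "Pseq TS i \<subseteq> p_Rules TS"
  unfolding Pseq_def by (induction i) (auto simp: Let_def Rset_def)

lemma Pseq_Recv_rule_handled_earlier:
  assumes "is_process TS" "t \<in> Pseq TS i" "p_lab TS t = Recv a"
  shows "\<exists>j<i. \<exists>t'\<in>Bset TS a. \<exists>c\<in>cmin TS t'. coverable TS (Pseq TS j) c"
  using assms(2,3)
proof (induction i)
  case 0
  then have "t \<in> p_Rules TS" "t \<notin> Rec TS" by (auto simp: Pseq_def)
  moreover from this have "p_lab TS t \<in> Bcast ` p_Sig TS \<union> Recv ` p_Sig TS"
    using assms(1) by (auto simp: is_process_def)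
  ultimately show ?case using 0 by (auto simp: Rec_def Rset_def)
next
  case (Suc i)
  show ?case
  proof (cases "t \<in> Pseq TS i")
    case True
    then show ?thesis using Suc by (meson less_Suc_eq)
  next
    case False
    then obtain b where b: "b \<in> new_letters TS (Pseq TS i) (snd (pseq TS i))" "t \<in> Rset TS b"
      using Suc(2) by (auto simp: Pseq_def Let_def)
    then have "b = a" using Suc(3) by (auto simp: Rset_def)
    then show ?thesis using b(1) by (auto simp: new_letters_def)
  qed
qed

lemma Bcast_enabled_above_cmin:
  assumes "is_process TS" "t \<in> Bset TS a" "c \<in> cmin TS t" "p_le TS c s"
  shows "\<exists>x. R_rel TS s (Bcast a) x"
proof -
  obtain c' where c': "p_step TS t c c'" using assms(3) by (auto simp: cmin_def enabled_def)
  have t: "t \<in> p_Rules TS" "p_lab TS t = Bcast a" using assms(2) by (auto simp: Bset_def)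
  then have "compatible TS {t}" using assms(1) by (auto simp: is_process_def)
  then obtain x where "lts TS {t} s (Bcast a) x"
    using c' t assms(4) unfolding compatible_def lts_def by blast
  then show ?thesis using t unfolding lts_def by auto
qed

lemma Pseq_reach_rbn_realisable:
  assumes proc: "is_process TS"
  shows "s0 \<in> p_init TS \<Longrightarrow> ts_reach TS (Pseq TS i) s0 s \<Longrightarrow> rbn_realisable TS s"
proof (induction i arbitrary: s0 s rule: less_induct)
  case (less i)
  from less.prems(2) show ?case unfolding ts_reach_def
  proof (induction rule: rtranclp_induct)
    case base
    show ?case using rbn_realisable_init[OF less.prems(1)] .
  next
    case (step s s')
    obtain t where t: "t \<in> Pseq TS i" "p_step TS t s s'" using step(2) by (auto simp: ts_step_def)
    have "t \<in> p_Rules TS" using t(1) Pseq_subset_Rules[of TS i] by blast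
    show ?case
    proof (cases "p_lab TS t")
      case (Bcast a)
      then have "R_rel TS s (Bcast a) s'" using t \<open>t \<in> p_Rules TS\<close> by (auto simp: lts_def)
      then show ?thesis by (rule rbn_realisable_broadcast[OF step(3)])
    next
      case (Recv a)
      then have receive: "R_rel TS s (Recv a) s'" using t \<open>t \<in> p_Rules TS\<close> by (auto simp: lts_def)
      obtain j t' c r0 r where "j < i" "t' \<in> Bset TS a" "c \<in> cmin TS t'" "p_le TS c r"
        and r: "r0 \<in> p_init TS" "ts_reach TS (Pseq TS j) r0 r"
        using Pseq_Recv_rule_handled_earlier[OF proc t(1) Recv] by (auto simp: coverable_def)
      then obtain x where "R_rel TS r (Bcast a) x"
        using Bcast_enabled_above_cmin[OF proc] by blast
      moreover have "rbn_realisable TS r"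
        using less.IH[OF \<open>j < i\<close> r] .
      ultimately show ?thesis
        using rbn_realisable_receive[OF step(3) receive] by blast
    qed
  qed
qed

theorem lemma10:
  fixes TS :: "('s, 'a, 'r) process" and i :: nat and s0 s :: 's
  assumes "is_process TS"
    and "i \<le> final_index TS"
    and "s0 \<in> p_init TS"
    and "ts_reach TS (Pseq TS i) s0 s"
  shows "\<exists>\<theta>0 \<theta> v. \<theta>0 \<in> Theta0 TS \<and> rbn_reach TS \<theta>0 \<theta> \<and> v \<in> Vs \<theta> \<and> Lab \<theta> v = s"
proof -
  have "rbn_realisable TS s"
    using Pseq_reach_rbn_realisable[OF assms(1,3,4)] .
  then obtain \<theta>0 \<theta> where \<theta>: "\<theta>0 \<in> Theta0 TS" "rbn_reach TS \<theta>0 \<theta>" "0 \<in> Vs \<theta>0" "Lab \<theta> 0 = s"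
    unfolding rbn_realisable_def using finite.emptyI empty_iff by blast
  moreover have "Vs \<theta> = Vs \<theta>0"
    using rbn_reach_sgraph_wf[OF \<theta>(2) Theta0_sgraph_wf[OF \<theta>(1)]] by simp
  ultimately show ?thesis by auto
qed

end
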